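(* Consider a system of $B$ boxes, each caching $M$ distinct contents (in an arbitrary placement) and able to serve at most $U$ concurrent unit-rate streams. The catalogue consists of a fixed finite number of classes $i\in\mathcal{I}$; class $i$ contains $\alpha_iB$ contents, each receiving requests according to an independent Poisson process of rate $\nu_i>0$; let $\alpha=\sum_i\alpha_i$. Service times are independent exponential of mean $1$, and an arriving request is accepted iff the resulting vector $\mathbf{n}$ of ongoing requests per content satisfies $\sum_{c\in\mathcal{S}}n_c\le U\,|\{b:\mathcal{S}\cap\mathcal{J}_b\neq\emptyset\}|$ for every set of contents $\mathcal{S}$ (where $\mathcal{J}_b$ is the cache of box $b$), and rejected otherwise. Let $M'=\lceil 2M/\alpha\rceil$. Then (i) more than half of the contents are replicated (cached) at most $M'$ times; and (ii) for each content replicated at most $M'$ times, the stationary loss probability of its requests is at least $E(\inf_i\nu_i,M'U)>0$, where $$E(\nu,C)=\frac{\nu^C}{C!}\Big[\sum_{n=0}^{C}\frac{\nu^n}{n!}\Big]^{-1}$$ is the Erlang function.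
   Context: The acceptance condition is equivalent (by Hall's theorem) to the existence of an assignment of all ongoing requests to boxes holding the requested content with at most $U$ requests per box. *)

theory Defs
  imports Complex_Main
begin

text \<open>Boxes are 0..B-1; box b caches the set J b of contents; Cs is the (finite)
  catalogue of contents; U is the per-box streaming capacity.
  A state is a vector n of ongoing requests per content (zero outside Cs).\<close>

definition feasible :: "nat \<Rightarrow> (nat \<Rightarrow> 'c set) \<Rightarrow> 'c set \<Rightarrow> nat \<Rightarrow> ('c \<Rightarrow> nat) \<Rightarrow> bool" where
  "feasible B J Cs U n \<longleftrightarrow>
     (\<forall>S. S \<subseteq> Cs \<longrightarrow> (\<Sum>c\<in>S. n c) \<le> U * card {b. b < B \<and> S \<inter> J b \<noteq> {}})"

definition states :: "nat \<Rightarrow> (nat \<Rightarrow> 'c set) \<Rightarrow> 'c set \<Rightarrow> nat \<Rightarrow> ('c \<Rightarrow> nat) set" where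
  "states B J Cs U = {n. (\<forall>c. c \<notin> Cs \<longrightarrow> n c = 0) \<and> feasible B J Cs U n}"

text \<open>Stationary distribution of the loss-network Markov chain: arrivals for content c
  at rate \<nu> (cls c), accepted iff the resulting state is feasible; each ongoing request
  completes at rate 1. Global balance equations on the (finite) state space.\<close>

definition stationary_dist ::
  "nat \<Rightarrow> (nat \<Rightarrow> 'c set) \<Rightarrow> 'c set \<Rightarrow> nat \<Rightarrow> ('c \<Rightarrow> 'i) \<Rightarrow> ('i \<Rightarrow> real)
     \<Rightarrow> (('c \<Rightarrow> nat) \<Rightarrow> real) \<Rightarrow> bool" where
  "stationary_dist B J Cs U cls \<nu> \<pi> \<longleftrightarrow>
     (\<forall>n\<in>states B J Cs U. \<pi> n \<ge> 0) \<and>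
     (\<Sum>n\<in>states B J Cs U. \<pi> n) = 1 \<and>
     (\<forall>m\<in>states B J Cs U.
        \<pi> m * (\<Sum>c\<in>Cs. (if feasible B J Cs U (m(c := Suc (m c))) then \<nu> (cls c) else 0)
                        + real (m c))
        = (\<Sum>c\<in>Cs. (if m c > 0 then \<nu> (cls c) * \<pi> (m(c := m c - 1)) else 0)
              + (if m(c := Suc (m c)) \<in> states B J Cs U
                 then real (Suc (m c)) * \<pi> (m(c := Suc (m c))) else 0)))"

text \<open>Stationary loss probability of requests for content c (by PASTA, the stationary
  probability of the states in which an arriving request for c is rejected).\<close>

definition loss_prob ::
  "nat \<Rightarrow> (nat \<Rightarrow> 'c set) \<Rightarrow> 'c set \<Rightarrow> nat \<Rightarrow> (('c \<Rightarrow> nat) \<Rightarrow> real) \<Rightarrow> 'c \<Rightarrow> real" where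
  "loss_prob B J Cs U \<pi> c =
     (\<Sum>n\<in>{n \<in> states B J Cs U. \<not> feasible B J Cs U (n(c := Suc (n c)))}. \<pi> n)"

definition replication :: "nat \<Rightarrow> (nat \<Rightarrow> 'c set) \<Rightarrow> 'c \<Rightarrow> nat" where
  "replication B J c = card {b. b < B \<and> c \<in> J b}"

definition erlang :: "real \<Rightarrow> nat \<Rightarrow> real" where
  "erlang \<nu> C = (\<nu> ^ C / fact C) / (\<Sum>n\<le>C. \<nu> ^ n / fact n)"

end

theory Submission
  imports Defs
begin

(*
  The global balance equations force the product form: dividing a stationary pi by the
  product weight prod_c nu_c^(n_c) / n_c! turns it into a function whose value at every
  state is a weighted average of its values at the neighbouring states, hence constant by
  the maximum principle. For a content c with replication r, push the c-coordinate of every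
  state up to its largest feasible value. This maps all states onto the states blocking c,
  and each fibre weighs at most 1 / E(nu_c, r U) times its blocking state, because
  n_c <= r U in every feasible state. So c is blocked with probability at least E(nu_c, r U),
  which decreases in r and increases in nu_c. Part (i) is Markov's inequality: the
  replications sum to B M while there are alpha B contents.
*)

lemma states_downward_closed:
  assumes "n \<in> states B J Cs U" and "\<And>x. m x \<le> n x"
  shows "m \<in> states B J Cs U"
proof -
  have "\<forall>c. c \<notin> Cs \<longrightarrow> m c = 0"
    using assms unfolding states_def by (metis (mono_tags, lifting) le_zero_eq mem_Collect_eq)
  moreover have "feasible B J Cs U m"
    unfolding feasible_def
  proof (intro allI impI)
    fix S assume "S \<subseteq> Cs"
    have "(\<Sum>c\<in>S. m c) \<le> (\<Sum>c\<in>S. n c)" by (rule sum_mono) (use assms in auto)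
    also have "\<dots> \<le> U * card {b. b < B \<and> S \<inter> J b \<noteq> {}}"
      using assms(1) \<open>S \<subseteq> Cs\<close> unfolding states_def feasible_def by auto
    finally show "(\<Sum>c\<in>S. m c) \<le> U * card {b. b < B \<and> S \<inter> J b \<noteq> {}}" .
  qed
  ultimately show ?thesis unfolding states_def by auto
qed

lemma states_le_capacity:
  assumes "c \<in> Cs" and "n \<in> states B J Cs U"
  shows "n c \<le> U * replication B J c"
proof -
  have "(\<Sum>d\<in>{c}. n d) \<le> U * card {b. b < B \<and> {c} \<inter> J b \<noteq> {}}"
    using assms unfolding states_def feasible_def by auto
  moreover have "{b. b < B \<and> {c} \<inter> J b \<noteq> {}} = {b. b < B \<and> c \<in> J b}" by auto
  ultimately show ?thesis unfolding replication_def by simp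
qed

lemma replication_le: "replication B J c \<le> B"
  unfolding replication_def
  by (metis (no_types, lifting) card_lessThan card_mono finite_lessThan lessThan_iff mem_Collect_eq subsetI)

lemma finite_states:
  assumes "finite Cs"
  shows "finite (states B J Cs U)"
proof -
  let ?F = "{f. \<forall>x. (x \<in> Cs \<longrightarrow> f x \<in> {..U * B}) \<and> (x \<notin> Cs \<longrightarrow> f x = 0)}"
  have "states B J Cs U \<subseteq> ?F"
  proof
    fix n assume n: "n \<in> states B J Cs U"
    have "\<forall>x\<in>Cs. n x \<le> U * B"
      using states_le_capacity[OF _ n] replication_le by (meson le_trans mult_le_mono2)
    with n show "n \<in> ?F" unfolding states_def by auto
  qed
  moreover have "finite ?F" using finite_set_of_finite_funs[OF assms, of "{..U * B}" 0] by simp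
  ultimately show ?thesis by (rule finite_subset)
qed

lemma zero_in_states: "(\<lambda>_. 0) \<in> states B J Cs U"
  unfolding states_def feasible_def by auto

lemma fun_upd_in_states_iff:
  assumes "c \<in> Cs" and "m \<in> states B J Cs U"
  shows "m(c := k) \<in> states B J Cs U \<longleftrightarrow> feasible B J Cs U (m(c := k))"
  using assms unfolding states_def by auto

definition inv_erlang :: "real \<Rightarrow> nat \<Rightarrow> real" where
  "inv_erlang v K = (\<Sum>n\<le>K. v ^ n / fact n) * fact K / v ^ K"

lemma erlang_eq_inverse: "v > 0 \<Longrightarrow> erlang v K = 1 / inv_erlang v K"
  unfolding erlang_def inv_erlang_def by (simp add: field_simps)

lemma inv_erlang_0 [simp]: "inv_erlang v 0 = 1"
  unfolding inv_erlang_def by simp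

lemma inv_erlang_Suc:
  assumes "v \<noteq> 0"
  shows "inv_erlang v (Suc K) = inv_erlang v K * real (Suc K) / v + 1"
proof -
  let ?S = "\<Sum>n\<le>K. v ^ n / fact n"
  have "inv_erlang v (Suc K) = (?S + v ^ Suc K / fact (Suc K)) * fact (Suc K) / v ^ Suc K"
    by (simp add: inv_erlang_def)
  also have "\<dots> = ?S * fact (Suc K) / v ^ Suc K + 1"
    using assms by (simp add: distrib_right add_divide_distrib del: fact_Suc)
  also have "?S * fact (Suc K) / v ^ Suc K = inv_erlang v K * real (Suc K) / v"
    by (simp add: inv_erlang_def fact_Suc power_Suc mult_ac)
  finally show ?thesis .
qed

lemma inv_erlang_ge_1:
  assumes "v > 0"
  shows "inv_erlang v K \<ge> 1"
proof (induction K)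
  case (Suc K)
  then show ?case using inv_erlang_Suc[of v K] assms by simp
qed simp

lemma inv_erlang_le_Suc:
  assumes "v > 0"
  shows "inv_erlang v K \<le> inv_erlang v (Suc K)"
proof (induction K)
  case 0
  then show ?case using inv_erlang_Suc[of v 0] assms by simp
next
  case (Suc K)
  define a b d where "a = inv_erlang v K" and "b = inv_erlang v (Suc K)"
    and "d = inv_erlang v (Suc (Suc K))"
  have "d - b = (b * real (Suc (Suc K)) - a * real (Suc K)) / v"
    using inv_erlang_Suc[of v K] inv_erlang_Suc[of v "Suc K"] assms
    by (simp add: a_def b_def d_def field_simps)
  moreover have "a * real (Suc K) \<le> b * real (Suc K)"
    using Suc by (simp add: a_def b_def)
  moreover have "b \<ge> 0" using inv_erlang_ge_1[OF assms, of "Suc K"] by (simp add: b_def)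
  ultimately have "d - b \<ge> 0" using assms by (simp add: algebra_simps)
  then show ?case by (simp add: b_def d_def)
qed

lemma inv_erlang_mono:
  assumes "v > 0" and "K \<le> K'"
  shows "inv_erlang v K \<le> inv_erlang v K'"
  using lift_Suc_mono_le[of "inv_erlang v", OF inv_erlang_le_Suc[OF assms(1)] assms(2)] .

lemma inv_erlang_antimono:
  assumes "0 < v1" and "v1 \<le> v2"
  shows "inv_erlang v2 K \<le> inv_erlang v1 K"
proof (induction K)
  case (Suc K)
  have "inv_erlang v2 K * (real (Suc K) / v2) \<le> inv_erlang v1 K * (real (Suc K) / v1)"
    by (rule mult_mono[OF Suc]) (use assms inv_erlang_ge_1[of v1 K] in \<open>auto simp: frac_le\<close>)
  then show ?case using inv_erlang_Suc[of v1 K] inv_erlang_Suc[of v2 K] assms by simp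
qed simp

lemma erlang_pos: "v > 0 \<Longrightarrow> erlang v K > 0"
  using erlang_eq_inverse inv_erlang_ge_1 by (metis less_le_trans zero_less_divide_1_iff zero_less_one)

lemma erlang_antimono_capacity:
  assumes "v > 0" and "K \<le> K'"
  shows "erlang v K' \<le> erlang v K"
  using inv_erlang_mono[OF assms] inv_erlang_ge_1[OF assms(1), of K] assms(1)
  by (simp add: erlang_eq_inverse frac_le)

lemma erlang_mono_rate:
  assumes "0 < v1" and "v1 \<le> v2"
  shows "erlang v1 K \<le> erlang v2 K"
  using inv_erlang_antimono[OF assms] inv_erlang_ge_1[of v2 K] assms
  by (simp add: erlang_eq_inverse frac_le)

definition product_weight :: "('c \<Rightarrow> real) \<Rightarrow> 'c set \<Rightarrow> ('c \<Rightarrow> nat) \<Rightarrow> real" where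
  "product_weight w Cs n = (\<Prod>d\<in>Cs. w d ^ n d / fact (n d))"

lemma product_weight_fun_upd:
  assumes "finite Cs" and "c \<in> Cs"
  shows "product_weight w Cs (n(c := k)) =
           (\<Prod>d\<in>Cs - {c}. w d ^ n d / fact (n d)) * (w c ^ k / fact k)"
proof -
  have "product_weight w Cs (n(c := k)) =
        (w c ^ k / fact k) * (\<Prod>d\<in>Cs - {c}. w d ^ (n(c := k)) d / fact ((n(c := k)) d))"
    unfolding product_weight_def
    using prod.remove[OF assms, of "\<lambda>d. w d ^ (n(c := k)) d / fact ((n(c := k)) d)"] by simp
  also have "(\<Prod>d\<in>Cs - {c}. w d ^ (n(c := k)) d / fact ((n(c := k)) d)) =
             (\<Prod>d\<in>Cs - {c}. w d ^ n d / fact (n d))"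
    by (rule prod.cong) auto
  finally show ?thesis by (simp only: mult.commute)
qed

lemma product_weight_pos: "\<forall>d\<in>Cs. w d > 0 \<Longrightarrow> product_weight w Cs n > 0"
  unfolding product_weight_def by (intro prod_pos) auto

lemma product_weight_zero [simp]: "product_weight w Cs (\<lambda>_. 0) = 1"
  unfolding product_weight_def by simp

lemma product_weight_Suc:
  assumes "finite Cs" and "c \<in> Cs"
  shows "product_weight w Cs (m(c := Suc (m c))) * real (Suc (m c)) = w c * product_weight w Cs m"
proof -
  let ?R = "\<Prod>d\<in>Cs - {c}. w d ^ m d / fact (m d)"
  have "w c ^ Suc (m c) / fact (Suc (m c)) * real (Suc (m c)) = w c * (w c ^ m c / fact (m c))"
    by (simp add: fact_Suc)
  then have "?R * (w c ^ Suc (m c) / fact (Suc (m c))) * real (Suc (m c)) =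
             w c * (?R * (w c ^ m c / fact (m c)))"
    by (simp only: mult.assoc mult.left_commute)
  then show ?thesis
    using product_weight_fun_upd[OF assms, of w m "Suc (m c)"]
      product_weight_fun_upd[OF assms, of w m "m c"] by simp
qed

lemma product_weight_pred:
  assumes "finite Cs" and "c \<in> Cs" and "m c > 0"
  shows "w c * product_weight w Cs (m(c := m c - 1)) = real (m c) * product_weight w Cs m"
proof -
  have "(m(c := m c - 1))(c := Suc ((m(c := m c - 1)) c)) = m" and "Suc (m c - 1) = m c"
    using assms(3) by auto
  then show ?thesis
    using product_weight_Suc[OF assms(1,2), of w "m(c := m c - 1)"] by (simp add: mult.commute)
qed

definition loss_generator ::
  "nat \<Rightarrow> (nat \<Rightarrow> 'c set) \<Rightarrow> 'c set \<Rightarrow> nat \<Rightarrow> ('c \<Rightarrow> real) \<Rightarrow> (('c \<Rightarrow> nat) \<Rightarrow> real)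
     \<Rightarrow> ('c \<Rightarrow> nat) \<Rightarrow> real" where
  "loss_generator B J Cs U w h m =
     (\<Sum>c\<in>Cs. (if feasible B J Cs U (m(c := Suc (m c))) then w c * (h (m(c := Suc (m c))) - h m) else 0)
            + (if 0 < m c then real (m c) * (h (m(c := m c - 1)) - h m) else 0))"

lemma loss_generator_uminus:
  "loss_generator B J Cs U w (\<lambda>n. - h n) m = - loss_generator B J Cs U w h m"
  unfolding loss_generator_def sum_negf[symmetric] by (intro sum.cong) (auto simp: algebra_simps)

lemma balance_summand_product_form:
  assumes fin: "finite Cs" and c: "c \<in> Cs" and m: "m \<in> states B J Cs U"
    and \<pi>: "\<And>n. \<pi> n = f n * product_weight w Cs n"
  shows "(if m c > 0 then w c * \<pi> (m(c := m c - 1)) else 0)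
           + (if m(c := Suc (m c)) \<in> states B J Cs U then real (Suc (m c)) * \<pi> (m(c := Suc (m c))) else 0)
           - \<pi> m * ((if feasible B J Cs U (m(c := Suc (m c))) then w c else 0) + real (m c))
         = product_weight w Cs m *
             ((if feasible B J Cs U (m(c := Suc (m c))) then w c * (f (m(c := Suc (m c))) - f m) else 0)
              + (if 0 < m c then real (m c) * (f (m(c := m c - 1)) - f m) else 0))"
proof -
  have down: "(if m c > 0 then w c * \<pi> (m(c := m c - 1)) else 0)
      = product_weight w Cs m * (if 0 < m c then real (m c) * f (m(c := m c - 1)) else 0)"
    using product_weight_pred[OF fin c, of m w] \<pi>[of "m(c := m c - 1)"] by (auto simp: algebra_simps)
  have up: "(if m(c := Suc (m c)) \<in> states B J Cs U then real (Suc (m c)) * \<pi> (m(c := Suc (m c))) else 0)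
      = product_weight w Cs m *
          (if feasible B J Cs U (m(c := Suc (m c))) then w c * f (m(c := Suc (m c))) else 0)"
  proof -
    have "real (Suc (m c)) * \<pi> (m(c := Suc (m c))) =
          f (m(c := Suc (m c))) * (product_weight w Cs (m(c := Suc (m c))) * real (Suc (m c)))"
      using \<pi>[of "m(c := Suc (m c))"] by (simp add: mult_ac del: of_nat_Suc)
    also have "\<dots> = product_weight w Cs m * (w c * f (m(c := Suc (m c))))"
      using product_weight_Suc[OF fin c, of w m] by (simp add: mult_ac del: of_nat_Suc)
    finally show ?thesis using fun_upd_in_states_iff[OF c m] by simp
  qed
  show ?thesis unfolding down up \<pi>[of m] by (simp add: algebra_simps)
qed

lemma stationary_dist_generator_zero:
  assumes fin: "finite Cs" and \<nu>: "\<forall>d\<in>Cs. \<nu> (cls d) > 0"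
    and st: "stationary_dist B J Cs U cls \<nu> \<pi>" and m: "m \<in> states B J Cs U"
  shows "loss_generator B J Cs U (\<lambda>d. \<nu> (cls d))
           (\<lambda>n. \<pi> n / product_weight (\<lambda>d. \<nu> (cls d)) Cs n) m = 0"
proof -
  define w where "w = (\<lambda>d. \<nu> (cls d))"
  define f where "f = (\<lambda>n. \<pi> n / product_weight w Cs n)"
  have pos: "product_weight w Cs n > 0" for n using \<nu> by (simp add: w_def product_weight_pos)
  have \<pi>: "\<pi> n = f n * product_weight w Cs n" for n using pos[of n] by (simp add: f_def)
  define X where "X c = (if m c > 0 then w c * \<pi> (m(c := m c - 1)) else 0)
    + (if m(c := Suc (m c)) \<in> states B J Cs U then real (Suc (m c)) * \<pi> (m(c := Suc (m c))) else 0)" for c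
  define D where "D c = (if feasible B J Cs U (m(c := Suc (m c))) then w c else 0) + real (m c)" for c
  have "\<pi> m * sum D Cs = sum X Cs"
    using st m unfolding stationary_dist_def X_def D_def w_def by blast
  then have "0 = (\<Sum>c\<in>Cs. X c - \<pi> m * D c)" by (simp add: sum_subtractf sum_distrib_left)
  also have "\<dots> = product_weight w Cs m * loss_generator B J Cs U w f m"
    unfolding loss_generator_def sum_distrib_left X_def D_def
    using balance_summand_product_form[OF fin _ m \<pi>] by (intro sum.cong) auto
  finally show ?thesis using pos[of m] unfolding w_def f_def by simp
qed

lemma generator_zero_max_pred:
  assumes fin: "finite Cs" and w: "\<forall>d\<in>Cs. w d \<ge> 0"
    and m: "m \<in> states B J Cs U" and gen: "loss_generator B J Cs U w h m = 0"
    and max: "\<forall>n\<in>states B J Cs U. h n \<le> h m"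
    and c: "c \<in> Cs" "m c > 0"
  shows "h (m(c := m c - 1)) = h m"
proof -
  define up down where
    "up d = (if feasible B J Cs U (m(d := Suc (m d))) then w d * (h (m(d := Suc (m d))) - h m) else 0)"
    and "down d = (if 0 < m d then real (m d) * (h (m(d := m d - 1)) - h m) else 0)" for d
  have up_nonpos: "up d \<le> 0" if "d \<in> Cs" for d
  proof (cases "feasible B J Cs U (m(d := Suc (m d)))")
    case True
    then have "h (m(d := Suc (m d))) \<le> h m" using max fun_upd_in_states_iff[OF that m] by blast
    then show ?thesis using True w that by (simp add: up_def mult_nonneg_nonpos)
  qed (simp add: up_def)
  have down_nonpos: "down d \<le> 0" if "d \<in> Cs" for d
  proof -
    have "0 < m d \<Longrightarrow> m(d := m d - 1) \<in> states B J Cs U"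
      using states_downward_closed[OF m] by auto
    then show ?thesis using max by (auto simp: down_def mult_nonneg_nonpos)
  qed
  have "(\<Sum>d\<in>Cs. up d + down d) = 0"
    using gen unfolding loss_generator_def up_def down_def .
  then have "(\<Sum>d\<in>Cs. - (up d + down d)) = 0" by (simp only: sum_negf)
  moreover have "\<forall>d\<in>Cs. - (up d + down d) \<ge> 0"
  proof
    fix d assume "d \<in> Cs"
    then show "- (up d + down d) \<ge> 0" using up_nonpos[of d] down_nonpos[of d] by linarith
  qed
  ultimately have "\<forall>d\<in>Cs. - (up d + down d) = 0"
    using sum_nonneg_eq_0_iff[OF fin, of "\<lambda>d. - (up d + down d)"] by blast
  then have "up c + down c = 0" using c(1) by fastforce
  then have "down c = 0" using up_nonpos[OF c(1)] down_nonpos[OF c(1)] by linarith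
  then show ?thesis using c(2) by (simp add: down_def)
qed

lemma generator_zero_max_at_zero:
  assumes fin: "finite Cs" and w: "\<forall>d\<in>Cs. w d \<ge> 0"
    and gen: "\<forall>n\<in>states B J Cs U. loss_generator B J Cs U w h n = 0"
    and m: "m \<in> states B J Cs U" and max: "\<forall>n\<in>states B J Cs U. h n \<le> h m"
  shows "h (\<lambda>_. 0) = h m"
  using m max
proof (induction "sum m Cs" arbitrary: m rule: less_induct)
  case less
  show ?case
  proof (cases "\<forall>c\<in>Cs. m c = 0")
    case True
    then have "m = (\<lambda>_. 0)" using less.prems(1) unfolding states_def by auto
    then show ?thesis by simp
  next
    case False
    then obtain c where c: "c \<in> Cs" "m c > 0" by auto
    define m' where "m' = m(c := m c - 1)"
    have m': "m' \<in> states B J Cs U" using states_downward_closed[OF less.prems(1)] by (auto simp: m'_def)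
    have eq: "h m' = h m"
      unfolding m'_def using generator_zero_max_pred[OF fin w less.prems(1) _ less.prems(2) c] gen less.prems(1)
      by blast
    have "sum m' Cs < sum m Cs"
      by (rule sum_strict_mono_ex1[OF fin]) (use c in \<open>auto simp: m'_def\<close>)
    then show ?thesis using less.hyps[OF _ m'] less.prems(2) eq by simp
  qed
qed

lemma generator_zero_constant:
  assumes fin: "finite Cs" and w: "\<forall>d\<in>Cs. w d \<ge> 0"
    and gen: "\<forall>n\<in>states B J Cs U. loss_generator B J Cs U w h n = 0"
    and n: "n \<in> states B J Cs U"
  shows "h n = h (\<lambda>_. 0)"
proof -
  have le_zero: "g n \<le> g (\<lambda>_. 0)" if "\<forall>n\<in>states B J Cs U. loss_generator B J Cs U w g n = 0" for g
  proof -
    let ?S = "states B J Cs U"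
    have "finite ?S" "?S \<noteq> {}" using finite_states[OF fin] zero_in_states by blast+
    then have "Max (g ` ?S) \<in> g ` ?S" and "\<forall>n\<in>?S. g n \<le> Max (g ` ?S)" by simp_all
    then obtain m where m: "m \<in> ?S" and max: "\<forall>n\<in>?S. g n \<le> g m" by auto
    show ?thesis using generator_zero_max_at_zero[OF fin w that m max] max n by simp
  qed
  have "- h n \<le> - h (\<lambda>_. 0)" using le_zero[of "\<lambda>n. - h n"] gen by (simp add: loss_generator_uminus)
  then show ?thesis using le_zero[of h] gen by simp
qed

lemma stationary_dist_product_form:
  assumes fin: "finite Cs" and \<nu>: "\<forall>d\<in>Cs. \<nu> (cls d) > 0"
    and st: "stationary_dist B J Cs U cls \<nu> \<pi>" and n: "n \<in> states B J Cs U"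
  shows "\<pi> n = \<pi> (\<lambda>_. 0) * product_weight (\<lambda>d. \<nu> (cls d)) Cs n"
proof -
  let ?f = "\<lambda>n. \<pi> n / product_weight (\<lambda>d. \<nu> (cls d)) Cs n"
  have "?f n = ?f (\<lambda>_. 0)"
    by (rule generator_zero_constant[OF fin _ _ n, of "\<lambda>d. \<nu> (cls d)"])
      (use \<nu> stationary_dist_generator_zero[OF fin \<nu> st] in \<open>auto simp: less_imp_le\<close>)
  then show ?thesis using product_weight_pos[OF \<nu>, of n] by (simp add: field_simps)
qed

definition saturate ::
  "nat \<Rightarrow> (nat \<Rightarrow> 'c set) \<Rightarrow> 'c set \<Rightarrow> nat \<Rightarrow> 'c \<Rightarrow> ('c \<Rightarrow> nat) \<Rightarrow> ('c \<Rightarrow> nat)" where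
  "saturate B J Cs U c n = n(c := Max {k. n(c := k) \<in> states B J Cs U})"

lemma fun_upd_in_states_iff_le:
  assumes c: "c \<in> Cs" and t: "t \<in> states B J Cs U"
    and blocked: "\<not> feasible B J Cs U (t(c := Suc (t c)))"
  shows "t(c := k) \<in> states B J Cs U \<longleftrightarrow> k \<le> t c"
proof
  assume k: "t(c := k) \<in> states B J Cs U"
  show "k \<le> t c"
  proof (rule ccontr)
    assume "\<not> k \<le> t c"
    then have "t(c := Suc (t c)) \<in> states B J Cs U"
      using states_downward_closed[OF k, of "t(c := Suc (t c))"] by auto
    then show False using blocked unfolding states_def by auto
  qed
qed (use states_downward_closed[OF t] in auto)

lemma finite_fun_upd_states:
  assumes "c \<in> Cs"
  shows "finite {k. n(c := k) \<in> states B J Cs U}"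
  using states_le_capacity[OF assms, of "n(c := _)"]
  by (fastforce intro: finite_subset[of _ "{..U * replication B J c}"])

lemma le_saturate:
  assumes "c \<in> Cs" and "n \<in> states B J Cs U"
  shows "n c \<le> saturate B J Cs U c n c"
  using Max_ge[OF finite_fun_upd_states[OF assms(1)], of "n c"] assms(2)
  unfolding saturate_def by simp

lemma saturate_blocking:
  assumes c: "c \<in> Cs" and n: "n \<in> states B J Cs U"
  shows "saturate B J Cs U c n \<in> states B J Cs U"
    and "\<not> feasible B J Cs U ((saturate B J Cs U c n)(c := Suc (saturate B J Cs U c n c)))"
proof -
  let ?K = "{k. n(c := k) \<in> states B J Cs U}"
  have fin: "finite ?K" by (rule finite_fun_upd_states[OF c])
  have "n c \<in> ?K" using n by simp
  then have "Max ?K \<in> ?K" using Max_in[OF fin] by blast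
  then show st: "saturate B J Cs U c n \<in> states B J Cs U" unfolding saturate_def by simp
  show "\<not> feasible B J Cs U ((saturate B J Cs U c n)(c := Suc (saturate B J Cs U c n c)))"
  proof
    assume "feasible B J Cs U ((saturate B J Cs U c n)(c := Suc (saturate B J Cs U c n c)))"
    then have "Suc (Max ?K) \<in> ?K"
      using fun_upd_in_states_iff[OF c st] unfolding saturate_def by simp
    then show False using Max_ge[OF fin] by fastforce
  qed
qed

lemma saturate_fibre:
  assumes c: "c \<in> Cs" and t: "t \<in> states B J Cs U"
    and blocked: "\<not> feasible B J Cs U (t(c := Suc (t c)))"
  shows "{n \<in> states B J Cs U. saturate B J Cs U c n = t} = (\<lambda>j. t(c := j)) ` {..t c}"
proof -
  have K: "{k. (t(c := j))(c := k) \<in> states B J Cs U} = {..t c}" for j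
    using fun_upd_in_states_iff_le[OF c t blocked] by auto
  have "Max {..t c} = t c" by (rule Max_eqI) auto
  then have "saturate B J Cs U c (t(c := j)) = t" for j unfolding saturate_def K by simp
  moreover have "n = t(c := n c)" and "n c \<le> t c"
    if "n \<in> states B J Cs U" and "saturate B J Cs U c n = t" for n
    using le_saturate[OF c that(1)] that(2) unfolding saturate_def by auto
  ultimately show ?thesis using K by auto
qed

lemma sum_product_weight_le_blocking:
  assumes fin: "finite Cs" and c: "c \<in> Cs" and w: "\<forall>d\<in>Cs. w d > 0"
  shows "(\<Sum>n\<in>states B J Cs U. product_weight w Cs n)
           \<le> inv_erlang (w c) (U * replication B J c) *
               (\<Sum>n\<in>{n \<in> states B J Cs U. \<not> feasible B J Cs U (n(c := Suc (n c)))}. product_weight w Cs n)"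
    (is "(\<Sum>n\<in>?S. _) \<le> _ * (\<Sum>n\<in>?L. _)")
proof -
  let ?C = "U * replication B J c"
  have img: "saturate B J Cs U c ` ?S \<subseteq> ?L" using saturate_blocking[OF c] by blast
  have wc: "w c > 0" using w c by blast
  have "(\<Sum>n\<in>?S. product_weight w Cs n) =
        (\<Sum>t\<in>?L. \<Sum>n\<in>{n \<in> ?S. saturate B J Cs U c n = t}. product_weight w Cs n)"
    using sum.group[OF finite_states[OF fin] _ img, of "product_weight w Cs"] finite_states[OF fin]
    by simp
  also have "\<dots> = (\<Sum>t\<in>?L. product_weight w Cs t * inv_erlang (w c) (t c))"
  proof (rule sum.cong[OF refl])
    fix t assume t: "t \<in> ?L"
    let ?R = "\<Prod>d\<in>Cs - {c}. w d ^ t d / fact (t d)"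
    have "{n \<in> ?S. saturate B J Cs U c n = t} = (\<lambda>j. t(c := j)) ` {..t c}"
      using saturate_fibre[OF c] t by blast
    moreover have "inj_on (\<lambda>j. t(c := j)) {..t c}" by (auto simp: inj_on_def dest: fun_upd_eqD)
    ultimately have "(\<Sum>n\<in>{n \<in> ?S. saturate B J Cs U c n = t}. product_weight w Cs n) =
          (\<Sum>j\<le>t c. product_weight w Cs (t(c := j)))"
      by (simp add: sum.reindex)
    also have "\<dots> = ?R * (\<Sum>j\<le>t c. w c ^ j / fact j)"
      using product_weight_fun_upd[OF fin c] by (simp add: sum_distrib_left)
    also have "\<dots> = (?R * (w c ^ t c / fact (t c))) * inv_erlang (w c) (t c)"
      using wc unfolding inv_erlang_def by (simp add: field_simps)
    also have "?R * (w c ^ t c / fact (t c)) = product_weight w Cs t"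
      using product_weight_fun_upd[OF fin c, of w t "t c"] by simp
    finally show "(\<Sum>n\<in>{n \<in> ?S. saturate B J Cs U c n = t}. product_weight w Cs n) =
                  product_weight w Cs t * inv_erlang (w c) (t c)" .
  qed
  also have "\<dots> \<le> (\<Sum>t\<in>?L. product_weight w Cs t * inv_erlang (w c) ?C)"
  proof (rule sum_mono)
    fix t assume "t \<in> ?L"
    then have "inv_erlang (w c) (t c) \<le> inv_erlang (w c) ?C"
      using inv_erlang_mono[OF wc] states_le_capacity[OF c] by blast
    then show "product_weight w Cs t * inv_erlang (w c) (t c) \<le> product_weight w Cs t * inv_erlang (w c) ?C"
      using product_weight_pos[OF w] by (simp add: less_imp_le)
  qed
  also have "\<dots> = inv_erlang (w c) ?C * (\<Sum>t\<in>?L. product_weight w Cs t)"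
    by (simp add: sum_distrib_left mult.commute)
  finally show ?thesis .
qed

lemma loss_prob_ge_erlang:
  assumes fin: "finite Cs" and \<nu>: "\<forall>d\<in>Cs. \<nu> (cls d) > 0"
    and st: "stationary_dist B J Cs U cls \<nu> \<pi>" and c: "c \<in> Cs"
  shows "loss_prob B J Cs U \<pi> c \<ge> erlang (\<nu> (cls c)) (U * replication B J c)"
proof -
  let ?w = "\<lambda>d. \<nu> (cls d)" and ?S = "states B J Cs U"
  let ?L = "{n \<in> ?S. \<not> feasible B J Cs U (n(c := Suc (n c)))}"
  let ?G = "inv_erlang (\<nu> (cls c)) (U * replication B J c)"
  have \<pi>: "\<pi> n = \<pi> (\<lambda>_. 0) * product_weight ?w Cs n" if "n \<in> ?S" for n
    using stationary_dist_product_form[OF fin \<nu> st that] .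
  have "1 = (\<Sum>n\<in>?S. \<pi> n)" using st unfolding stationary_dist_def by simp
  also have "\<dots> = (\<Sum>n\<in>?S. \<pi> (\<lambda>_. 0) * product_weight ?w Cs n)"
    by (intro sum.cong refl \<pi>)
  also have "\<dots> = \<pi> (\<lambda>_. 0) * (\<Sum>n\<in>?S. product_weight ?w Cs n)"
    by (simp add: sum_distrib_left)
  also have "\<dots> \<le> \<pi> (\<lambda>_. 0) * (?G * (\<Sum>n\<in>?L. product_weight ?w Cs n))"
    using sum_product_weight_le_blocking[OF fin c \<nu>] st zero_in_states[of B J Cs U]
    unfolding stationary_dist_def by (intro mult_left_mono) blast+
  also have "\<dots> = ?G * (\<Sum>n\<in>?L. \<pi> (\<lambda>_. 0) * product_weight ?w Cs n)"
    by (simp add: sum_distrib_left mult_ac)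
  also have "\<dots> = ?G * loss_prob B J Cs U \<pi> c"
    unfolding loss_prob_def by (intro arg_cong[where f = "(*) ?G"] sum.cong refl \<pi>[symmetric]) simp
  finally have "1 \<le> ?G * loss_prob B J Cs U \<pi> c" .
  moreover have "?G \<ge> 1" using inv_erlang_ge_1 \<nu> c by blast
  ultimately show ?thesis
    using \<nu> c by (simp add: erlang_eq_inverse divide_le_eq mult.commute)
qed

lemma card_filter_le_gt_half:
  fixes r :: "'a \<Rightarrow> nat"
  assumes fin: "finite A" and small: "2 * sum r A < (K + 1) * card A"
  shows "card A < 2 * card {x \<in> A. r x \<le> K}"
proof (rule ccontr)
  let ?L = "{x \<in> A. r x \<le> K}" and ?H = "{x \<in> A. \<not> r x \<le> K}"
  assume "\<not> ?thesis"
  have "A = ?L \<union> ?H" by auto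
  then have "card A = card ?L + card ?H" using fin card_Un_disjoint[of ?L ?H] by auto
  with \<open>\<not> ?thesis\<close> have "card A \<le> 2 * card ?H" by simp
  then have "(K + 1) * card A \<le> (K + 1) * (2 * card ?H)" by (rule mult_le_mono2)
  also have "(K + 1) * card ?H \<le> sum r ?H"
    using sum_mono[of ?H "\<lambda>_. K + 1" r] by (simp add: mult.commute)
  then have "(K + 1) * (2 * card ?H) \<le> 2 * sum r ?H" by simp
  also have "sum r ?H \<le> sum r A" using fin by (intro sum_mono2) auto
  then have "2 * sum r ?H \<le> 2 * sum r A" by simp
  finally show False using small by simp
qed

lemma sum_replication:
  assumes fin: "finite Cs" and caches: "\<forall>b<B. J b \<subseteq> Cs \<and> card (J b) = M"
  shows "(\<Sum>c\<in>Cs. replication B J c) = B * M"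
proof -
  have "(\<Sum>c\<in>Cs. replication B J c) = (\<Sum>c\<in>Cs. \<Sum>b<B. if c \<in> J b then 1 else (0::nat))"
    unfolding replication_def by (intro sum.cong refl) (simp add: sum.If_cases Int_def)
  also have "\<dots> = (\<Sum>b<B. \<Sum>c\<in>Cs. if c \<in> J b then 1 else (0::nat))" by (rule sum.swap)
  also have "\<dots> = (\<Sum>b<B. M)"
  proof (rule sum.cong[OF refl])
    fix b assume "b \<in> {..<B}"
    then have "Cs \<inter> J b = J b" and "card (J b) = M" using caches by auto
    then show "(\<Sum>c\<in>Cs. if c \<in> J b then 1 else (0::nat)) = M"
      using fin by (simp add: sum.If_cases Int_def)
  qed
  finally show ?thesis by simp
qed

lemma majority_low_replication:
  assumes fin: "finite Cs" and B: "B > 0" and a: "a > 0" and card: "real (card Cs) = a * real B"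
    and caches: "\<forall>b<B. J b \<subseteq> Cs \<and> card (J b) = M"
  shows "real (card {c \<in> Cs. replication B J c \<le> nat \<lceil>2 * real M / a\<rceil>}) > real (card Cs) / 2"
proof -
  let ?K = "nat \<lceil>2 * real M / a\<rceil>"
  have "2 * real M / a < real ?K + 1" by linarith
  then have "2 * real M < (real ?K + 1) * a" using a by (simp add: pos_divide_less_eq)
  then have "2 * real M * real B < (real ?K + 1) * a * real B" using B by simp
  then have "real (2 * (\<Sum>c\<in>Cs. replication B J c)) < real ((?K + 1) * card Cs)"
    unfolding sum_replication[OF fin caches] using card by (simp add: algebra_simps)
  then have "2 * (\<Sum>c\<in>Cs. replication B J c) < (?K + 1) * card Cs"
    by (simp only: of_nat_less_iff)
  then show ?thesis using card_filter_le_gt_half[OF fin] by fastforce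
qed

theorem lemma1:
  fixes B M U :: nat and J :: "nat \<Rightarrow> 'c set" and Cs :: "'c set"
    and I :: "'i set" and cls :: "'c \<Rightarrow> 'i" and \<alpha> \<nu> :: "'i \<Rightarrow> real"
  assumes B_pos: "B > 0"
    and fin_I: "finite I" and I_ne: "I \<noteq> {}"
    and fin_Cs: "finite Cs"
    and cls_in: "\<forall>c\<in>Cs. cls c \<in> I"
    and alpha_pos: "\<forall>i\<in>I. \<alpha> i > 0"
    and class_size: "\<forall>i\<in>I. real (card {c\<in>Cs. cls c = i}) = \<alpha> i * real B"
    and nu_pos: "\<forall>i\<in>I. \<nu> i > 0"
    and caches: "\<forall>b<B. J b \<subseteq> Cs \<and> card (J b) = M"
  shows "let M' = nat \<lceil>2 * real M / (\<Sum>i\<in>I. \<alpha> i)\<rceil> in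
           real (card {c\<in>Cs. replication B J c \<le> M'}) > real (card Cs) / 2
         \<and> (\<forall>c\<in>Cs. replication B J c \<le> M' \<longrightarrow>
               (\<forall>\<pi>. stationary_dist B J Cs U cls \<nu> \<pi> \<longrightarrow>
                   loss_prob B J Cs U \<pi> c \<ge> erlang (Min (\<nu> ` I)) (M' * U)
                   \<and> erlang (Min (\<nu> ` I)) (M' * U) > 0))"
  unfolding Let_def
proof (intro conjI ballI impI allI)
  let ?M' = "nat \<lceil>2 * real M / (\<Sum>i\<in>I. \<alpha> i)\<rceil>" and ?v = "Min (\<nu> ` I)"
  have \<alpha>: "(\<Sum>i\<in>I. \<alpha> i) > 0" using alpha_pos fin_I I_ne by (simp add: sum_pos)
  have "card Cs = (\<Sum>i\<in>I. card {c \<in> Cs. cls c = i})"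
    using sum.group[OF fin_Cs fin_I, of cls "\<lambda>_. 1 :: nat"] cls_in by (simp add: image_subset_iff)
  then have "real (card Cs) = (\<Sum>i\<in>I. \<alpha> i) * real B"
    using class_size by (simp add: sum_distrib_right)
  then show "real (card {c \<in> Cs. replication B J c \<le> ?M'}) > real (card Cs) / 2"
    by (rule majority_low_replication[OF fin_Cs B_pos \<alpha> _ caches])
  have v_pos: "?v > 0" using fin_I I_ne nu_pos by simp
  then show "erlang ?v (?M' * U) > 0" by (rule erlang_pos)
  fix c \<pi>
  assume c: "c \<in> Cs" and low: "replication B J c \<le> ?M'"
    and st: "stationary_dist B J Cs U cls \<nu> \<pi>"
  have "erlang ?v (?M' * U) \<le> erlang (\<nu> (cls c)) (?M' * U)"
    using v_pos fin_I cls_in c by (intro erlang_mono_rate) auto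
  also have "\<dots> \<le> erlang (\<nu> (cls c)) (U * replication B J c)"
    using nu_pos cls_in c low by (intro erlang_antimono_capacity) auto
  also have "\<dots> \<le> loss_prob B J Cs U \<pi> c"
    using nu_pos cls_in by (intro loss_prob_ge_erlang[OF fin_Cs _ st c]) auto
  finally show "loss_prob B J Cs U \<pi> c \<ge> erlang ?v (?M' * U)" .
qed

end
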